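(* Let $X$ be a locally compact Hausdorff space. In the category $\mathrm{SUM}(X)$, the one-point compactification $X+_{f_\infty}\{\infty\}$, where $f_\infty(F)=\emptyset$ if $F$ is compact and $f_\infty(F)=\{\infty\}$ otherwise, is a terminal object.
   Context: $\mathrm{Closed}(A)$ is the set of closed subsets of $A$; an admissible map $f:\mathrm{Closed}(X)\to\mathrm{Closed}(Y)$ satisfies $f(\emptyset)=\emptyset$ and preserves finite unions; $X+_fY$ is $X\sqcup Y$ with closed sets the $D$ such that $D\cap X$ is closed in $X$, $D\cap Y$ closed in $Y$ and $f(D\cap X)\subseteq D$. $\mathrm{SUM}(X)$ is the category whose objects are Hausdorff spaces of the form $X+_fY$ and whose morphisms are continuous maps of the form $\mathrm{id}+\phi:X+_{f_1}Y_1\to X+_{f_2}Y_2$ (identity on $X$, $\phi:Y_1\to Y_2$ on the remainders). *)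

theory Defs
  imports "HOL-Analysis.Analysis"
begin

definition admissible :: "'a topology \<Rightarrow> 'b topology \<Rightarrow> ('a set \<Rightarrow> 'b set) \<Rightarrow> bool" where
  "admissible X Y f \<longleftrightarrow>
     (\<forall>F. closedin X F \<longrightarrow> closedin Y (f F)) \<and>
     f {} = {} \<and>
     (\<forall>A B. closedin X A \<longrightarrow> closedin X B \<longrightarrow> f (A \<union> B) = f A \<union> f B)"

definition sum_closed :: "'a topology \<Rightarrow> ('a set \<Rightarrow> 'b set) \<Rightarrow> 'b topology \<Rightarrow> ('a + 'b) set \<Rightarrow> bool" where
  "sum_closed X f Y D \<longleftrightarrow>
     D \<subseteq> Inl ` topspace X \<union> Inr ` topspace Y \<and>
     closedin X (Inl -` D) \<and> closedin Y (Inr -` D) \<and>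
     Inr ` f (Inl -` D) \<subseteq> D"

text \<open>The space X +_f Y (a topology whenever f is admissible).\<close>
definition plus_top :: "'a topology \<Rightarrow> ('a set \<Rightarrow> 'b set) \<Rightarrow> 'b topology \<Rightarrow> ('a + 'b) topology" where
  "plus_top X f Y = topology (\<lambda>U. U \<subseteq> Inl ` topspace X \<union> Inr ` topspace Y \<and>
      sum_closed X f Y ((Inl ` topspace X \<union> Inr ` topspace Y) - U))"

definition id_plus :: "('b \<Rightarrow> 'c) \<Rightarrow> ('a + 'b) \<Rightarrow> ('a + 'c)" where
  "id_plus \<phi> z = (case z of Inl x \<Rightarrow> Inl x | Inr y \<Rightarrow> Inr (\<phi> y))"

definition SUM_obj :: "'a topology \<Rightarrow> ('a set \<Rightarrow> 'b set) \<Rightarrow> 'b topology \<Rightarrow> bool" where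
  "SUM_obj X f Y \<longleftrightarrow> admissible X Y f \<and> Hausdorff_space (plus_top X f Y)"

definition SUM_mor :: "'a topology \<Rightarrow> ('a set \<Rightarrow> 'b set) \<Rightarrow> 'b topology \<Rightarrow>
    ('a set \<Rightarrow> 'c set) \<Rightarrow> 'c topology \<Rightarrow> ('b \<Rightarrow> 'c) \<Rightarrow> bool" where
  "SUM_mor X f1 Y1 f2 Y2 \<phi> \<longleftrightarrow> continuous_map (plus_top X f1 Y1) (plus_top X f2 Y2) (id_plus \<phi>)"

text \<open>The one-point remainder {\<infinity>} (unit type) and f_\<infinity>.\<close>
definition point_top :: "unit topology" where
  "point_top = discrete_topology {()}"

definition f_infty :: "'a topology \<Rightarrow> 'a set \<Rightarrow> unit set" where
  "f_infty X F = (if compactin X F then {} else {()})"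

end

theory Submission
  imports Defs
begin

(* If X +_f Y is Hausdorff, compact subsets of X stay compact, hence closed, in X +_f Y,
   which forces f to vanish on them. Since f_infty is nonempty exactly on non-compact
   sets, this is what makes id + (constant map) continuous into X +_f_infty {infty};
   uniqueness is automatic because the remainder is a point. Hausdorffness of the
   one-point compactification uses local compactness: a point of X with a compact
   neighbourhood K is separated from infty by the complement of K, which is open because
   f_infty K is empty. *)

lemma vimage_Inl_image_Inl [simp]: "Inl -` Inl ` A = A"
  and vimage_Inr_image_Inr [simp]: "Inr -` Inr ` B = B"
  and vimage_Inl_image_Inr [simp]: "Inl -` Inr ` B = {}"
  and vimage_Inr_image_Inl [simp]: "Inr -` Inl ` A = {}"
  by auto

lemma admissible_closedin_subset:
  assumes "admissible X Y f" "closedin X A"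
  shows "f A \<subseteq> topspace Y"
  using assms closedin_subset unfolding admissible_def by blast

lemma admissible_mono:
  assumes "admissible X Y f" "closedin X A" "closedin X B" "A \<subseteq> B"
  shows "f A \<subseteq> f B"
proof -
  have "f B = f (A \<union> B)" using \<open>A \<subseteq> B\<close> by (simp add: Un_absorb1)
  also have "\<dots> = f A \<union> f B" using assms unfolding admissible_def by blast
  finally show ?thesis by blast
qed

lemma sum_closed_Un:
  assumes adm: "admissible X Y f" and "sum_closed X f Y D" "sum_closed X f Y E"
  shows "sum_closed X f Y (D \<union> E)"
proof -
  have "closedin X (Inl -` D)" "closedin X (Inl -` E)"
    using assms unfolding sum_closed_def by auto
  then have "f (Inl -` (D \<union> E)) = f (Inl -` D) \<union> f (Inl -` E)"
    using adm unfolding admissible_def vimage_Un by blast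
  with assms show ?thesis
    unfolding sum_closed_def vimage_Un by blast
qed

lemma sum_closed_Inter:
  assumes adm: "admissible X Y f" and \<D>: "\<And>D. D \<in> \<D> \<Longrightarrow> sum_closed X f Y D"
  shows "sum_closed X f Y ((Inl ` topspace X \<union> Inr ` topspace Y) \<inter> \<Inter>\<D>)"
    (is "sum_closed X f Y ?C")
proof -
  have Inl_C: "Inl -` ?C = \<Inter>(insert (topspace X) ((\<lambda>D. Inl -` D) ` \<D>))" by auto
  have Inr_C: "Inr -` ?C = \<Inter>(insert (topspace Y) ((\<lambda>D. Inr -` D) ` \<D>))" by auto
  have closed_Inl: "closedin X (Inl -` ?C)"
    unfolding Inl_C using \<D> by (intro closedin_Inter) (auto simp: sum_closed_def)
  have closed_Inr: "closedin Y (Inr -` ?C)"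
    unfolding Inr_C using \<D> by (intro closedin_Inter) (auto simp: sum_closed_def)
  have "f (Inl -` ?C) \<subseteq> Inr -` D" if "D \<in> \<D>" for D
  proof -
    have "closedin X (Inl -` D)" "Inr ` f (Inl -` D) \<subseteq> D"
      using \<D>[OF that] by (auto simp: sum_closed_def)
    moreover have "f (Inl -` ?C) \<subseteq> f (Inl -` D)"
      using admissible_mono[OF adm closed_Inl] calculation(1) that by blast
    ultimately show ?thesis by blast
  qed
  moreover have "f (Inl -` ?C) \<subseteq> topspace Y"
    using admissible_closedin_subset[OF adm closed_Inl] .
  ultimately show ?thesis
    unfolding sum_closed_def using closed_Inl closed_Inr by blast
qed

lemma istopology_plus_top:
  assumes adm: "admissible X Y f"
  shows "istopology (\<lambda>U. U \<subseteq> Inl ` topspace X \<union> Inr ` topspace Y \<and>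
      sum_closed X f Y ((Inl ` topspace X \<union> Inr ` topspace Y) - U))"
  unfolding istopology_def
proof (rule conjI; intro allI impI)
  let ?T = "Inl ` topspace X \<union> Inr ` topspace Y"
  fix S U
  assume S: "S \<subseteq> ?T \<and> sum_closed X f Y (?T - S)" and U: "U \<subseteq> ?T \<and> sum_closed X f Y (?T - U)"
  have "sum_closed X f Y ((?T - S) \<union> (?T - U))"
    using S U by (intro sum_closed_Un[OF adm]) blast+
  moreover have "?T - S \<inter> U = (?T - S) \<union> (?T - U)" by blast
  ultimately show "S \<inter> U \<subseteq> ?T \<and> sum_closed X f Y (?T - S \<inter> U)"
    using S by auto
next
  let ?T = "Inl ` topspace X \<union> Inr ` topspace Y"
  fix \<U>
  assume \<U>: "\<forall>U\<in>\<U>. U \<subseteq> ?T \<and> sum_closed X f Y (?T - U)"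
  have "sum_closed X f Y (?T \<inter> \<Inter>((\<lambda>U. ?T - U) ` \<U>))"
    using \<U> by (intro sum_closed_Inter[OF adm]) blast
  moreover have "?T - \<Union>\<U> = ?T \<inter> \<Inter>((\<lambda>U. ?T - U) ` \<U>)" by blast
  moreover have "\<Union>\<U> \<subseteq> ?T" using \<U> by blast
  ultimately show "\<Union>\<U> \<subseteq> ?T \<and> sum_closed X f Y (?T - \<Union>\<U>)" by simp
qed

lemma openin_plus_top:
  assumes "admissible X Y f"
  shows "openin (plus_top X f Y) U \<longleftrightarrow> U \<subseteq> Inl ` topspace X \<union> Inr ` topspace Y \<and>
      sum_closed X f Y ((Inl ` topspace X \<union> Inr ` topspace Y) - U)"
  unfolding plus_top_def using istopology_plus_top[OF assms] by simp

lemma topspace_plus_top: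
  assumes adm: "admissible X Y f"
  shows "topspace (plus_top X f Y) = Inl ` topspace X \<union> Inr ` topspace Y"
proof -
  have "sum_closed X f Y {}"
    using adm unfolding sum_closed_def admissible_def by auto
  then have "openin (plus_top X f Y) (Inl ` topspace X \<union> Inr ` topspace Y)"
    using openin_plus_top[OF adm] by auto
  then show ?thesis
  proof (rule openin_subset[THEN subset_antisym[rotated]])
    show "topspace (plus_top X f Y) \<subseteq> Inl ` topspace X \<union> Inr ` topspace Y"
      using openin_plus_top[OF adm, of "topspace (plus_top X f Y)"] by simp
  qed
qed

lemma closedin_plus_top:
  assumes adm: "admissible X Y f"
  shows "closedin (plus_top X f Y) D \<longleftrightarrow> sum_closed X f Y D"
proof -
  let ?T = "Inl ` topspace X \<union> Inr ` topspace Y"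
  have "closedin (plus_top X f Y) D \<longleftrightarrow> D \<subseteq> ?T \<and> sum_closed X f Y (?T - (?T - D))"
    unfolding closedin_def topspace_plus_top[OF adm] openin_plus_top[OF adm] by auto
  also have "\<dots> \<longleftrightarrow> D \<subseteq> ?T \<and> sum_closed X f Y D"
    by (rule conj_cong) (simp_all add: Diff_Diff_Int Int_absorb1)
  also have "\<dots> \<longleftrightarrow> sum_closed X f Y D"
    unfolding sum_closed_def by blast
  finally show ?thesis .
qed

lemma openin_plus_top_Inl_image:
  assumes adm: "admissible X Y f" and U: "openin X U"
  shows "openin (plus_top X f Y) (Inl ` U)"
proof -
  let ?T = "Inl ` topspace X \<union> Inr ` topspace Y"
  have complement: "?T - Inl ` U = Inl ` (topspace X - U) \<union> Inr ` topspace Y" by auto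
  have "closedin X (topspace X - U)" using U by auto
  then have "sum_closed X f Y (?T - Inl ` U)"
    unfolding complement sum_closed_def vimage_Un
    using admissible_closedin_subset[OF adm] by auto
  moreover have "Inl ` U \<subseteq> ?T" using openin_subset[OF U] by auto
  ultimately show ?thesis using openin_plus_top[OF adm] by blast
qed

lemma closedin_plus_top_Inl_image:
  assumes adm: "admissible X Y f" and "closedin X K" "f K = {}"
  shows "closedin (plus_top X f Y) (Inl ` K)"
  using assms closedin_subset[of X K] unfolding closedin_plus_top[OF adm] sum_closed_def by auto

lemma continuous_map_Inl_plus_top:
  assumes adm: "admissible X Y f"
  shows "continuous_map X (plus_top X f Y) Inl"
  unfolding continuous_map_closedin
proof (intro conjI allI impI)
  show "Inl \<in> topspace X \<rightarrow> topspace (plus_top X f Y)"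
    using topspace_plus_top[OF adm] by auto
next
  fix C
  assume "closedin (plus_top X f Y) C"
  then have "closedin X (Inl -` C)"
    unfolding closedin_plus_top[OF adm] sum_closed_def by auto
  moreover have "{x \<in> topspace X. Inl x \<in> C} = Inl -` C"
    using closedin_subset[OF calculation] by auto
  ultimately show "closedin X {x \<in> topspace X. Inl x \<in> C}" by simp
qed

lemma kc_space_plus_top_imp_compactin_empty:
  assumes adm: "admissible X Y f" and kc: "kc_space (plus_top X f Y)" and C: "compactin X C"
  shows "f C = {}"
proof -
  have "compactin (plus_top X f Y) (Inl ` C)"
    using image_compactin[OF C continuous_map_Inl_plus_top[OF adm]] .
  then have "sum_closed X f Y (Inl ` C)"
    using kc closedin_plus_top[OF adm] unfolding kc_space_def by blast
  then have "Inr ` f C \<subseteq> Inl ` C"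
    unfolding sum_closed_def by simp
  then show ?thesis by auto
qed

lemma topspace_point_top [simp]: "topspace point_top = {()}"
  unfolding point_top_def by simp

lemma admissible_f_infty: "admissible X point_top (f_infty X)"
  unfolding admissible_def
proof (intro conjI allI impI)
  fix A B
  assume "closedin X A" "closedin X B"
  then have "compactin X (A \<union> B) \<longleftrightarrow> compactin X A \<and> compactin X B"
    using compactin_Un closed_compactin by blast
  then show "f_infty X (A \<union> B) = f_infty X A \<union> f_infty X B"
    unfolding f_infty_def by auto
qed (auto simp: f_infty_def point_top_def)

lemma Hausdorff_space_one_point_compactification:
  assumes lc: "locally_compact_space X" and H: "Hausdorff_space X"
  shows "Hausdorff_space (plus_top X (f_infty X) point_top)"
proof -
  let ?P = "plus_top X (f_infty X) point_top"
  note adm = admissible_f_infty[of X]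
  have topspace_P: "topspace ?P = Inl ` topspace X \<union> {Inr ()}"
    using topspace_plus_top[OF adm] by simp
  have separate_Inl: "\<exists>U V. openin ?P U \<and> openin ?P V \<and> Inl a \<in> U \<and> y \<in> V \<and> disjnt U V"
    if a: "a \<in> topspace X" and y: "y \<in> topspace ?P" "y \<noteq> Inl a" for a y
  proof (cases y)
    case (Inl b)
    with y topspace_P have "b \<in> topspace X" "b \<noteq> a" by auto
    then obtain U V where UV: "openin X U" "openin X V" "a \<in> U" "b \<in> V" "disjnt U V"
      using H a unfolding Hausdorff_space_def by blast
    show ?thesis
    proof (intro exI conjI)
      show "openin ?P (Inl ` U)" "openin ?P (Inl ` V)"
        using openin_plus_top_Inl_image[OF adm] UV(1,2) by blast+
      show "Inl a \<in> Inl ` U" "y \<in> Inl ` V" "disjnt (Inl ` U) (Inl ` V)"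
        using UV(3-5) Inl by (auto simp: disjnt_def)
    qed
  next
    case (Inr u)
    obtain U K where UK: "openin X U" "compactin X K" "a \<in> U" "U \<subseteq> K"
      using lc a unfolding locally_compact_space_def by blast
    have "closedin ?P (Inl ` K)"
      using closedin_plus_top_Inl_image[OF adm] compactin_imp_closedin[OF H UK(2)] UK(2)
      by (simp add: f_infty_def)
    then have "openin ?P (topspace ?P - Inl ` K)" by blast
    moreover have "y \<in> topspace ?P - Inl ` K" using y Inr by auto
    ultimately show ?thesis
      using openin_plus_top_Inl_image[OF adm UK(1)] UK(3,4) by (auto simp: disjnt_def)
  qed
  show ?thesis
    unfolding Hausdorff_space_def
  proof (intro allI impI)
    fix x y
    assume xy: "x \<in> topspace ?P \<and> y \<in> topspace ?P \<and> x \<noteq> y"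
    then consider a where "x = Inl a" "a \<in> topspace X" | b where "y = Inl b" "b \<in> topspace X"
      using topspace_P by auto
    then show "\<exists>U V. openin ?P U \<and> openin ?P V \<and> x \<in> U \<and> y \<in> V \<and> disjnt U V"
    proof cases
      case 1
      then show ?thesis using separate_Inl xy by blast
    next
      case 2
      then obtain V U where "openin ?P V" "openin ?P U" "y \<in> V" "x \<in> U" "disjnt V U"
        using separate_Inl[of b x] xy by auto
      then show ?thesis using disjnt_sym by blast
    qed
  qed
qed

lemma continuous_map_to_one_point_compactification:
  assumes adm: "admissible X Y f" and compact_empty: "\<And>C. compactin X C \<Longrightarrow> f C = {}"
  shows "continuous_map (plus_top X f Y) (plus_top X (f_infty X) point_top) (id_plus (\<lambda>_. ()))"
  unfolding continuous_map_closedin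
proof (intro conjI allI impI)
  note adm_infty = admissible_f_infty[of X]
  show "id_plus (\<lambda>_. ()) \<in> topspace (plus_top X f Y) \<rightarrow> topspace (plus_top X (f_infty X) point_top)"
    unfolding topspace_plus_top[OF adm] topspace_plus_top[OF adm_infty]
    by (auto simp: id_plus_def)
  fix D
  assume "closedin (plus_top X (f_infty X) point_top) D"
  then have D: "sum_closed X (f_infty X) point_top D"
    using closedin_plus_top[OF adm_infty] by blast
  let ?Q = "{z \<in> topspace (plus_top X f Y). id_plus (\<lambda>_. ()) z \<in> D}"
  have Inl_Q: "Inl -` ?Q = Inl -` D"
    using D unfolding topspace_plus_top[OF adm] sum_closed_def by (auto simp: id_plus_def)
  have Inr_Q: "Inr -` ?Q = (if Inr () \<in> D then topspace Y else {})"
    unfolding topspace_plus_top[OF adm] by (auto simp: id_plus_def)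
  have closed_Inl: "closedin X (Inl -` D)" using D unfolding sum_closed_def by blast
  have "Inr ` f (Inl -` D) \<subseteq> ?Q"
  proof (cases "Inr () \<in> D")
    case True
    then show ?thesis
      using admissible_closedin_subset[OF adm closed_Inl]
      by (auto simp: id_plus_def topspace_plus_top[OF adm])
  next
    case False
    with D have "compactin X (Inl -` D)"
      unfolding sum_closed_def f_infty_def by (auto split: if_splits)
    then show ?thesis using compact_empty by simp
  qed
  then have "sum_closed X f Y ?Q"
    unfolding sum_closed_def Inl_Q Inr_Q using closed_Inl topspace_plus_top[OF adm] by auto
  then show "closedin (plus_top X f Y) ?Q" using closedin_plus_top[OF adm] by blast
qed

theorem mainTheorem15:
  fixes X :: "'a topology"
  assumes "locally_compact_space X" and "Hausdorff_space X"
  shows "SUM_obj X (f_infty X) point_top \<and>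
    (\<forall>(f :: 'a set \<Rightarrow> 'b set) (Y :: 'b topology). SUM_obj X f Y \<longrightarrow>
        (\<exists>!\<phi>. \<phi> \<in> topspace Y \<rightarrow>\<^sub>E topspace point_top \<and>
               SUM_mor X f Y (f_infty X) point_top \<phi>))"
proof (intro conjI allI impI)
  show "SUM_obj X (f_infty X) point_top"
    unfolding SUM_obj_def
    using admissible_f_infty Hausdorff_space_one_point_compactification[OF assms] by blast
  fix f :: "'a set \<Rightarrow> 'b set" and Y :: "'b topology"
  assume "SUM_obj X f Y"
  then have adm: "admissible X Y f" and "kc_space (plus_top X f Y)"
    unfolding SUM_obj_def by (auto simp: Hausdorff_imp_kc_space)
  then have "SUM_mor X f Y (f_infty X) point_top (\<lambda>_. ())"
    unfolding SUM_mor_def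
    using continuous_map_to_one_point_compactification kc_space_plus_top_imp_compactin_empty
    by blast
  moreover have "(\<lambda>_. ()) \<in> topspace Y \<rightarrow>\<^sub>E topspace point_top"
    unfolding PiE_def extensional_def by simp
  moreover have "\<psi> = (\<lambda>_. ())" for \<psi> :: "'b \<Rightarrow> unit" by auto
  ultimately show "\<exists>!\<phi>. \<phi> \<in> topspace Y \<rightarrow>\<^sub>E topspace point_top \<and>
      SUM_mor X f Y (f_infty X) point_top \<phi>"
    by (intro ex1I[of _ "\<lambda>_. ()"]) auto
qed

end
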